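(* (1) If $(X,d)$ is a compact Busemann G-space and $S\subset X$ is the closure of a non-empty open subset of $X$, then the travel time map $\mathcal R_{X,S}\colon (X,d)\to(C(S),\|\cdot\|_\infty)$ is a topological embedding. (2) Let $(X,d)$ be a compact length space with closed measurement set $S$ such that $\mathcal R_{X,S}$ is a topological embedding, and let $\varepsilon>0$. Then $(X,d)$ with $S$ is $\mathrm{FLIE}_\varepsilon$ if and only if for all $p,q\in X$ with $d(p,q)<\varepsilon$ there is a distance minimizing curve from $p$ to $q$ (or from $q$ to $p$) that extends to a distance minimizing curve ending at some point of $S$.
   Context: A Busemann G-space is a metric space that is finitely compact (closed bounded sets are compact), metrically (Menger) convex, in which geodesics are locally extendable (every point has a neighborhood in which any shortest curve extends beyond its endpoints as a shortest curve), and in which geodesics do not branch (two shortest curves agreeing on a nontrivial initial segment coincide); compact Busemann G-spaces are length spaces. For a compact length space $(X,d)$ and closed $S\subset X$, $\mathcal R_{X,S}(p)(z)=d(p,z)$ for $z\in S$. A continuous map $f\colon (X,d_X)\to(Y,d_Y)$ is an $\varepsilon$-local isometry if $d_Y(f(p),f(q))=d_X(p,q)$ whenever $d_X(p,q)<\varepsilon$. $(X,d)$ with $S$ is $\mathrm{FLIE}_\varepsilon$ if $\mathcal R_{X,S}$ is a topological embedding and $\mathcal R_{X,S}\colon(X,d)\to(C(S),\|\cdot\|_\infty)$ is an $\varepsilon$-local isometry. *)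

theory Defs
  imports "HOL-Analysis.Analysis"
begin

text \<open>Throughout, a metric space (X,d) is modelled as a subset X of a type of
  class metric_space, with d = dist restricted to X.\<close>

definition curve_length :: "(real \<Rightarrow> 'a::metric_space) \<Rightarrow> real \<Rightarrow> real \<Rightarrow> ereal" where
  "curve_length g a b =
     (SUP nt \<in> {(n, t). t 0 = a \<and> t n = b \<and> (\<forall>i<n. t i \<le> t (Suc i))}.
        ereal (\<Sum>i<fst nt. dist (g (snd nt i)) (g (snd nt (Suc i)))))"

definition length_space :: "'a::metric_space set \<Rightarrow> bool" where
  "length_space X \<longleftrightarrow>
     (\<forall>p\<in>X. \<forall>q\<in>X. ereal (dist p q) =
        (INF g \<in> {g. path g \<and> path_image g \<subseteq> X \<and> pathstart g = p \<and> pathfinish g = q}.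
           curve_length g 0 1))"

definition shortest_curve :: "'a::metric_space set \<Rightarrow> (real \<Rightarrow> 'a) \<Rightarrow> real \<Rightarrow> real \<Rightarrow> bool" where
  "shortest_curve X g a b \<longleftrightarrow> a \<le> b \<and> g ` {a..b} \<subseteq> X \<and>
     (\<forall>s\<in>{a..b}. \<forall>t\<in>{a..b}. dist (g s) (g t) = \<bar>s - t\<bar>)"

definition finitely_compact :: "'a::metric_space set \<Rightarrow> bool" where
  "finitely_compact X \<longleftrightarrow>
     (\<forall>A. A \<subseteq> X \<and> closedin (top_of_set X) A \<and> bounded A \<longrightarrow> compact A)"

definition menger_convex :: "'a::metric_space set \<Rightarrow> bool" where
  "menger_convex X \<longleftrightarrow>
     (\<forall>x\<in>X. \<forall>y\<in>X. x \<noteq> y \<longrightarrow>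
        (\<exists>z\<in>X. z \<noteq> x \<and> z \<noteq> y \<and> dist x z + dist z y = dist x y))"

definition locally_extendable :: "'a::metric_space set \<Rightarrow> bool" where
  "locally_extendable X \<longleftrightarrow>
     (\<forall>p\<in>X. \<exists>r>0. \<forall>g a b. shortest_curve X g a b \<and> a < b \<and> g ` {a..b} \<subseteq> ball p r \<longrightarrow>
        (\<exists>h a' b'. a' < a \<and> b < b' \<and> shortest_curve X h a' b' \<and>
                   (\<forall>t\<in>{a..b}. h t = g t)))"

definition non_branching :: "'a::metric_space set \<Rightarrow> bool" where
  "non_branching X \<longleftrightarrow>
     (\<forall>g1 g2 a b1 b2 c. shortest_curve X g1 a b1 \<and> shortest_curve X g2 a b2 \<and>
        a < c \<and> c \<le> min b1 b2 \<and> (\<forall>t\<in>{a..c}. g1 t = g2 t) \<longrightarrow>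
        (\<forall>t\<in>{a..min b1 b2}. g1 t = g2 t))"

definition busemann_G_space :: "'a::metric_space set \<Rightarrow> bool" where
  "busemann_G_space X \<longleftrightarrow> finitely_compact X \<and> menger_convex X \<and>
     locally_extendable X \<and> non_branching X"

definition CS :: "'a::metric_space set \<Rightarrow> ('a \<Rightarrow> real) metric" where
  "CS S = cfunspace (top_of_set S) euclidean_metric"

definition travel_time :: "'a::metric_space set \<Rightarrow> 'a \<Rightarrow> ('a \<Rightarrow> real)" where
  "travel_time S p = restrict (\<lambda>z. dist p z) S"

definition travel_time_embedding :: "'a::metric_space set \<Rightarrow> 'a set \<Rightarrow> bool" where
  "travel_time_embedding X S \<longleftrightarrow>
     embedding_map (top_of_set X) (mtopology_of (CS S)) (travel_time S)"

definition local_isometry_CS :: "real \<Rightarrow> 'a::metric_space set \<Rightarrow> 'a set \<Rightarrow> ('a \<Rightarrow> 'a \<Rightarrow> real) \<Rightarrow> bool" where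
  "local_isometry_CS eps X S f \<longleftrightarrow>
     continuous_map (top_of_set X) (mtopology_of (CS S)) f \<and>
     (\<forall>p\<in>X. \<forall>q\<in>X. dist p q < eps \<longrightarrow> mdist (CS S) (f p) (f q) = dist p q)"

definition FLIE :: "real \<Rightarrow> 'a::metric_space set \<Rightarrow> 'a set \<Rightarrow> bool" where
  "FLIE eps X S \<longleftrightarrow> travel_time_embedding X S \<and> local_isometry_CS eps X S (travel_time S)"

text \<open>There is a distance minimizing curve from p to q (the restriction of g to [0, d(p,q)])
  which extends to a distance minimizing curve (g on [0,c]) ending at a point of S.\<close>
definition extends_to_S :: "'a::metric_space set \<Rightarrow> 'a set \<Rightarrow> 'a \<Rightarrow> 'a \<Rightarrow> bool" where
  "extends_to_S X S p q \<longleftrightarrow>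
     (\<exists>g c. shortest_curve X g 0 c \<and> g 0 = p \<and> dist p q \<le> c \<and> g (dist p q) = q \<and> g c \<in> S)"

end

theory Submission
  imports Defs
begin

text \<open>A compact space in which any two points have a midpoint (a compact length space, or a
  compact Menger convex space) is geodesic: the dyadic midpoint construction converges to a
  shortest curve. The travel time map is 1-Lipschitz into C(S), so on the compact space X it is
  an embedding as soon as it is injective. In a Busemann G-space injectivity comes from
  non-branching of shortest curves ending in the open set U. For the second
  statement, the sup-distance between two travel time functions is attained at some z in S, and
  it equals d(p,q) exactly when z lies on a shortest curve from p through q or from q through p.\<close>

lemma shortest_curve_dist:
  "shortest_curve X g a b \<Longrightarrow> s \<in> {a..b} \<Longrightarrow> t \<in> {a..b} \<Longrightarrow> dist (g s) (g t) = \<bar>s - t\<bar>"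
  unfolding shortest_curve_def by blast

lemma shortest_curve_subinterval:
  assumes "shortest_curve X g a b" "a \<le> a'" "a' \<le> b'" "b' \<le> b"
  shows "shortest_curve X g a' b'"
  using assms unfolding shortest_curve_def by (auto simp: subset_eq)

lemma shortest_curve_shift:
  "shortest_curve X g 0 L \<Longrightarrow> shortest_curve X (\<lambda>t. g (t - a)) a (a + L)"
  unfolding shortest_curve_def by (auto simp: subset_eq)

lemma shortest_curve_reverse:
  "shortest_curve X g 0 D \<Longrightarrow> shortest_curve X (\<lambda>t. g (D - t)) 0 D"
  unfolding shortest_curve_def by (auto simp: subset_eq)

lemma shortest_curve_join:
  assumes f: "shortest_curve X f a b" and h: "shortest_curve X h b c"
    and fh: "f b = h b" and d: "dist (f a) (h c) = c - a"
  shows "shortest_curve X (\<lambda>t. if t \<le> b then f t else h t) a c"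
proof -
  have ab: "a \<le> b" "b \<le> c" using f h by (auto simp: shortest_curve_def)
  have cross: "dist (f s) (h t) = t - s" if s: "s \<in> {a..b}" and t: "t \<in> {b..c}" for s t
  proof -
    have "dist (f s) (h t) \<le> dist (f s) (f b) + dist (h b) (h t)"
      using dist_triangle[of "f s" "h t" "f b"] fh by simp
    moreover have "dist (f a) (h c) \<le> dist (f a) (f s) + dist (f s) (h t) + dist (h t) (h c)"
      using dist_triangle[of "f a" "h c" "f s"] dist_triangle[of "f s" "h c" "h t"] by linarith
    moreover have "dist (f s) (f b) = b - s" "dist (h b) (h t) = t - b"
      "dist (f a) (f s) = s - a" "dist (h t) (h c) = c - t"
      using shortest_curve_dist[OF f, of s b] shortest_curve_dist[OF h, of b t]
        shortest_curve_dist[OF f, of a s] shortest_curve_dist[OF h, of t c] s t ab by auto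
    ultimately show ?thesis using d by linarith
  qed
  show ?thesis
    unfolding shortest_curve_def
  proof (intro conjI ballI)
    show "a \<le> c" using ab by simp
    show "(\<lambda>t. if t \<le> b then f t else h t) ` {a..c} \<subseteq> X"
      using f h by (auto simp: shortest_curve_def subset_eq)
  next
    fix s t assume s: "s \<in> {a..c}" and t: "t \<in> {a..c}"
    show "dist (if s \<le> b then f s else h s) (if t \<le> b then f t else h t) = \<bar>s - t\<bar>"
      using shortest_curve_dist[OF f, of s t] shortest_curve_dist[OF h, of s t]
        cross[of s t] cross[of t s] s t by (simp add: dist_commute)
  qed
qed

section \<open>Shortest curves from midpoints\<close>

lemma chain_dist_le:
  fixes x :: "nat \<Rightarrow> 'a::metric_space"
  assumes step: "\<And>i. i < k \<Longrightarrow> dist (x i) (x (Suc i)) \<le> \<delta>" and "j \<le> k"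
  shows "dist (x j) (x k) \<le> \<delta> * (real k - real j)"
  using assms
proof (induction k)
  case (Suc k)
  show ?case
  proof (cases "j = Suc k")
    case False
    then have "dist (x j) (x k) \<le> \<delta> * (real k - real j)" using Suc by simp
    then show ?thesis
      using Suc.prems(1)[of k] dist_triangle[of "x j" "x (Suc k)" "x k"] by (simp add: algebra_simps)
  qed simp
qed simp

lemma chain_dist_eq:
  fixes x :: "nat \<Rightarrow> 'a::metric_space"
  assumes step: "\<And>i. i < N \<Longrightarrow> dist (x i) (x (Suc i)) \<le> \<delta>" and ends: "dist (x 0) (x N) = N * \<delta>"
  shows "j \<le> N \<Longrightarrow> k \<le> N \<Longrightarrow> dist (x j) (x k) = \<delta> * \<bar>real j - real k\<bar>"
proof (induction j k rule: linorder_wlog)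
  case (le j k)
  have "dist (x 0) (x N) \<le> dist (x 0) (x j) + dist (x j) (x k) + dist (x k) (x N)"
    using dist_triangle[of "x 0" "x N" "x j"] dist_triangle[of "x j" "x N" "x k"] by linarith
  moreover have "dist (x 0) (x j) \<le> \<delta> * real j" "dist (x k) (x N) \<le> \<delta> * (real N - real k)"
    "dist (x j) (x k) \<le> \<delta> * (real k - real j)"
    using chain_dist_le[of j x \<delta> 0] chain_dist_le[of N x \<delta> k] chain_dist_le[of k x \<delta> j] step le
    by simp_all
  ultimately show ?case using ends le(1) by (simp add: algebra_simps)
qed (simp add: dist_commute abs_minus_commute)

text \<open>The point of level n and index k stands for the parameter k/2^n of the segment from
  p to q; each odd index is a midpoint M of its two neighbours of the previous level.\<close>
fun dyadic_point :: "('a \<Rightarrow> 'a \<Rightarrow> 'a) \<Rightarrow> 'a \<Rightarrow> 'a \<Rightarrow> nat \<Rightarrow> nat \<Rightarrow> 'a" where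
  "dyadic_point M p q 0 k = (if k = 0 then p else q)"
| "dyadic_point M p q (Suc n) k = (if even k then dyadic_point M p q n (k div 2)
     else M (dyadic_point M p q n (k div 2)) (dyadic_point M p q n (Suc (k div 2))))"

lemma dyadic_point_zero: "dyadic_point M p q n 0 = p"
  by (induction n) auto

lemma dyadic_point_top: "dyadic_point M p q n (2^n) = q"
  by (induction n) auto

context
  fixes X :: "'a::metric_space set" and M :: "'a \<Rightarrow> 'a \<Rightarrow> 'a" and p q :: 'a
  assumes midpoint: "\<And>x y. x \<in> X \<Longrightarrow> y \<in> X \<Longrightarrow>
      M x y \<in> X \<and> dist x (M x y) = dist x y / 2 \<and> dist (M x y) y = dist x y / 2"
    and p: "p \<in> X" and q: "q \<in> X"
begin

lemma dyadic_point_in: "dyadic_point M p q n k \<in> X"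
  by (induction n arbitrary: k) (auto simp: p q midpoint)

lemma dyadic_point_step:
  "k < 2^n \<Longrightarrow> dist (dyadic_point M p q n k) (dyadic_point M p q n (Suc k)) = dist p q / 2^n"
proof (induction n arbitrary: k)
  case (Suc n)
  define a where "a = k div 2"
  have "a < 2^n" using Suc.prems by (simp add: a_def)
  then have "dist (dyadic_point M p q n a) (dyadic_point M p q n (Suc a)) = dist p q / 2^n"
    by (rule Suc.IH)
  moreover note midpoint[OF dyadic_point_in dyadic_point_in, of n a n "Suc a"]
  moreover have "k = 2 * a \<or> k = 2 * a + 1" by (auto simp: a_def)
  ultimately show ?case by auto
qed simp

lemma dyadic_point_dist:
  "j \<le> 2^n \<Longrightarrow> k \<le> 2^n \<Longrightarrow>
     dist (dyadic_point M p q n j) (dyadic_point M p q n k) = dist p q / 2^n * \<bar>real j - real k\<bar>"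
  by (rule chain_dist_eq) (simp_all add: dyadic_point_step dyadic_point_zero dyadic_point_top)

lemma dyadic_point_refine: "dyadic_point M p q (n + i) (k * 2^i) = dyadic_point M p q n k"
  by (induction i) auto

lemma dyadic_point_dist_levels:
  assumes "j \<le> 2^n" "k \<le> 2^m"
  shows "dist (dyadic_point M p q n j) (dyadic_point M p q m k) =
    \<bar>dist p q * j / 2^n - dist p q * k / 2^m\<bar>"
proof -
  have "j * 2^m \<le> 2^(n+m)" "k * 2^n \<le> 2^(n+m)" using assms by (auto simp: power_add)
  moreover have "dyadic_point M p q n j = dyadic_point M p q (n+m) (j * 2^m)"
    "dyadic_point M p q m k = dyadic_point M p q (n+m) (k * 2^n)"
    using dyadic_point_refine[of n m j] dyadic_point_refine[of m n k] by (simp_all add: add.commute)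
  ultimately have "dist (dyadic_point M p q n j) (dyadic_point M p q m k) =
      dist p q / 2^(n+m) * \<bar>real (j * 2^m) - real (k * 2^n)\<bar>"
    by (simp only: dyadic_point_dist)
  also have "\<dots> = \<bar>dist p q / 2^(n+m) * (real (j * 2^m) - real (k * 2^n))\<bar>"
    by (simp add: abs_mult)
  also have "dist p q / 2^(n+m) * (real (j * 2^m) - real (k * 2^n)) =
      dist p q * j / 2^n - dist p q * k / 2^m"
    by (simp add: power_add field_simps)
  finally show ?thesis .
qed

end

lemma floor_dyadic_bounds:
  fixes D t :: real
  assumes "D > 0" "0 \<le> t"
  shows "t - D / 2^n \<le> D * nat \<lfloor>t * 2^n / D\<rfloor> / 2^n" "D * nat \<lfloor>t * 2^n / D\<rfloor> / 2^n \<le> t"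
proof -
  define x where "x = t * 2^n / D"
  have nat_floor: "real (nat \<lfloor>x\<rfloor>) = of_int \<lfloor>x\<rfloor>" using assms by (simp add: x_def)
  have t: "t = D * x / 2^n" using assms by (simp add: x_def)
  have "D * of_int \<lfloor>x\<rfloor> \<le> D * x" "D * x < D * (of_int \<lfloor>x\<rfloor> + 1)"
    using assms(1) by (intro mult_left_mono mult_strict_left_mono; linarith)+
  then have "(D * x - D) / 2^n \<le> D * of_int \<lfloor>x\<rfloor> / 2^n" "D * of_int \<lfloor>x\<rfloor> / 2^n \<le> D * x / 2^n"
    by (intro divide_right_mono; simp add: algebra_simps)+
  then show "t - D / 2^n \<le> D * nat \<lfloor>x\<rfloor> / 2^n" "D * nat \<lfloor>x\<rfloor> / 2^n \<le> t"
    by (simp_all only: nat_floor t diff_divide_distrib)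
qed

lemma floor_dyadic_tendsto:
  fixes D t :: real
  assumes "D > 0" "0 \<le> t"
  shows "(\<lambda>n. D * nat \<lfloor>t * 2^n / D\<rfloor> / 2^n) \<longlonglongrightarrow> t"
proof (rule tendsto_sandwich[of "\<lambda>n. t - D / 2^n" _ _ "\<lambda>n. t"])
  have "(\<lambda>n. t - D * inverse (2^n)) \<longlonglongrightarrow> t - D * 0"
    by (intro tendsto_intros LIMSEQ_inverse_realpow_zero) simp
  then show "(\<lambda>n. t - D / 2^n) \<longlonglongrightarrow> t" by (simp add: divide_inverse)
qed (use floor_dyadic_bounds[OF assms] in auto)

lemma shortest_curve_limit:
  fixes X :: "'a::metric_space set" and \<sigma> :: "real \<Rightarrow> nat \<Rightarrow> 'a"
  assumes "compact X" "a \<le> b"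
    and in_X: "\<And>t n. t \<in> {a..b} \<Longrightarrow> \<sigma> t n \<in> X"
    and dist: "\<And>s t n m. s \<in> {a..b} \<Longrightarrow> t \<in> {a..b} \<Longrightarrow> dist (\<sigma> s n) (\<sigma> t m) = \<bar>u s n - u t m\<bar>"
    and u: "\<And>t. t \<in> {a..b} \<Longrightarrow> u t \<longlonglongrightarrow> t"
  shows "\<exists>g. shortest_curve X g a b \<and> (\<forall>t\<in>{a..b}. \<sigma> t \<longlonglongrightarrow> g t)"
proof -
  have "\<exists>l\<in>X. \<sigma> t \<longlonglongrightarrow> l" if t: "t \<in> {a..b}" for t
  proof -
    have "Cauchy (u t)" using u[OF t] by (rule LIMSEQ_imp_Cauchy)
    then have "Cauchy (\<sigma> t)" unfolding Cauchy_def using dist[OF t t] by (simp add: dist_real_def)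
    then show ?thesis using compact_imp_complete[OF \<open>compact X\<close>] in_X[OF t] by (meson completeE)
  qed
  then obtain g where g: "\<And>t. t \<in> {a..b} \<Longrightarrow> g t \<in> X \<and> \<sigma> t \<longlonglongrightarrow> g t" by metis
  have "dist (g s) (g t) = \<bar>s - t\<bar>" if "s \<in> {a..b}" "t \<in> {a..b}" for s t
  proof (rule LIMSEQ_unique)
    show "(\<lambda>n. dist (\<sigma> s n) (\<sigma> t n)) \<longlonglongrightarrow> dist (g s) (g t)"
      using g that by (intro tendsto_intros) auto
    show "(\<lambda>n. dist (\<sigma> s n) (\<sigma> t n)) \<longlonglongrightarrow> \<bar>s - t\<bar>"
      using dist u that by (auto intro!: tendsto_intros)
  qed
  then have "shortest_curve X g a b"
    using g \<open>a \<le> b\<close> by (auto simp: shortest_curve_def)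
  then show ?thesis using g by blast
qed

definition has_midpoints :: "'a::metric_space set \<Rightarrow> bool" where
  "has_midpoints X \<longleftrightarrow>
     (\<forall>x\<in>X. \<forall>y\<in>X. \<exists>m\<in>X. dist x m = dist x y / 2 \<and> dist m y = dist x y / 2)"

lemma compact_has_midpoints_shortest_curve:
  fixes X :: "'a::metric_space set"
  assumes "compact X" "has_midpoints X" "p \<in> X" "q \<in> X"
  shows "\<exists>g. shortest_curve X g 0 (dist p q) \<and> g 0 = p \<and> g (dist p q) = q"
proof (cases "p = q")
  case True
  then show ?thesis using \<open>p \<in> X\<close> by (auto simp: shortest_curve_def)
next
  case False
  define D where "D = dist p q"
  have D: "D > 0" using False by (simp add: D_def)
  obtain M where M: "\<And>x y. x \<in> X \<Longrightarrow> y \<in> X \<Longrightarrow>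
      M x y \<in> X \<and> dist x (M x y) = dist x y / 2 \<and> dist (M x y) y = dist x y / 2"
    using \<open>has_midpoints X\<close> unfolding has_midpoints_def by metis
  define k where "k t n = nat \<lfloor>t * 2^n / D\<rfloor>" for t n
  define \<sigma> where "\<sigma> t n = dyadic_point M p q n (k t n)" for t n
  have k_le: "k t n \<le> 2^n" if "t \<le> D" for t n
  proof -
    have "\<lfloor>t * 2^n / D\<rfloor> \<le> \<lfloor>2^n :: real\<rfloor>" using that D by (intro floor_mono) (simp add: field_simps)
    then show ?thesis unfolding k_def by (simp add: nat_le_iff)
  qed
  have "\<exists>g. shortest_curve X g 0 D \<and> (\<forall>t\<in>{0..D}. \<sigma> t \<longlonglongrightarrow> g t)"
  proof (rule shortest_curve_limit[where u="\<lambda>t n. D * k t n / 2^n"])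
    show "\<sigma> t n \<in> X" for t n unfolding \<sigma>_def using dyadic_point_in[OF M \<open>p \<in> X\<close> \<open>q \<in> X\<close>] .
    show "dist (\<sigma> s n) (\<sigma> t m) = \<bar>D * k s n / 2^n - D * k t m / 2^m\<bar>"
      if "s \<in> {0..D}" "t \<in> {0..D}" for s t n m
      unfolding \<sigma>_def D_def
      using dyadic_point_dist_levels[OF M \<open>p \<in> X\<close> \<open>q \<in> X\<close> k_le k_le] that D_def by simp
    show "(\<lambda>n. D * k t n / 2^n) \<longlonglongrightarrow> t" if "t \<in> {0..D}" for t
      unfolding k_def using floor_dyadic_tendsto[OF D] that by simp
  qed (use \<open>compact X\<close> D in auto)
  then obtain g where g: "shortest_curve X g 0 D" "\<sigma> 0 \<longlonglongrightarrow> g 0" "\<sigma> D \<longlonglongrightarrow> g D"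
    using D by auto
  have "\<sigma> 0 = (\<lambda>n. p)" "\<sigma> D = (\<lambda>n. q)"
    using D unfolding \<sigma>_def k_def by (simp_all add: nat_power_eq dyadic_point_zero dyadic_point_top)
  then have "g 0 = p" "g D = q"
    using g(2,3) by (auto intro: LIMSEQ_unique)
  with g(1) show ?thesis unfolding D_def by blast
qed

section \<open>Midpoints in length spaces and Menger convex spaces\<close>

lemma compact_approx_midpoint_imp_midpoint:
  fixes X :: "'a::metric_space set"
  assumes "compact X" "p \<in> X"
    and approx: "\<And>e. e > 0 \<Longrightarrow> \<exists>m\<in>X. dist p m \<le> dist p q / 2 + e \<and> dist m q \<le> dist p q / 2 + e"
  shows "\<exists>m\<in>X. dist p m = dist p q / 2 \<and> dist m q = dist p q / 2"
proof -
  have "continuous_on X (\<lambda>m. max (dist p m) (dist m q))" by (intro continuous_intros)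
  then obtain m0 where m0: "m0 \<in> X"
    and min: "\<And>y. y \<in> X \<Longrightarrow> max (dist p m0) (dist m0 q) \<le> max (dist p y) (dist y q)"
    using continuous_attains_inf[OF \<open>compact X\<close>] \<open>p \<in> X\<close> by blast
  have "max (dist p m0) (dist m0 q) \<le> dist p q / 2"
  proof (rule field_le_epsilon)
    fix e :: real assume "e > 0"
    then obtain m where "m \<in> X" "max (dist p m) (dist m q) \<le> dist p q / 2 + e"
      using approx by fastforce
    then show "max (dist p m0) (dist m0 q) \<le> dist p q / 2 + e" using min by force
  qed
  then show ?thesis using m0 dist_triangle[of p q m0] by (intro bexI[of _ m0]) auto
qed

lemma curve_length_ge_two_chords:
  assumes "0 \<le> t" "t \<le> 1"
  shows "ereal (dist (g 0) (g t) + dist (g t) (g 1)) \<le> curve_length g 0 1"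
proof -
  define \<tau> where "\<tau> i = (if i = 0 then 0 else if i = (1::nat) then t else (1::real))" for i
  have "(2::nat, \<tau>) \<in> {(n, t). t 0 = 0 \<and> t n = 1 \<and> (\<forall>i<n. t i \<le> t (Suc i))}"
    using assms by (auto simp: \<tau>_def less_2_cases_iff)
  then have "ereal (\<Sum>i<fst (2::nat, \<tau>). dist (g (snd (2::nat, \<tau>) i)) (g (snd (2::nat, \<tau>) (Suc i))))
      \<le> curve_length g 0 1"
    unfolding curve_length_def by (rule SUP_upper)
  then show ?thesis by (simp add: \<tau>_def numeral_2_eq_2)
qed

lemma length_space_approx_midpoint:
  fixes X :: "'a::metric_space set"
  assumes "length_space X" "p \<in> X" "q \<in> X" "e > 0"
  shows "\<exists>m\<in>X. dist p m \<le> dist p q / 2 + e \<and> dist m q \<le> dist p q / 2 + e"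
proof -
  let ?G = "{g. path g \<and> path_image g \<subseteq> X \<and> pathstart g = p \<and> pathfinish g = q}"
  have "(INF g \<in> ?G. curve_length g 0 1) = ereal (dist p q)"
    using assms(1-3) unfolding length_space_def by auto
  then have "(INF g \<in> ?G. curve_length g 0 1) < ereal (dist p q + e)"
    using \<open>e > 0\<close> by simp
  then obtain g where g: "g \<in> ?G" and len: "curve_length g 0 1 < ereal (dist p q + e)"
    by (auto simp: INF_less_iff)
  have "continuous_on {0..1} (\<lambda>t. dist p (g t))"
    using g by (auto simp: path_def intro!: continuous_intros)
  then obtain t where t: "0 \<le> t" "t \<le> 1" "dist p (g t) = dist p q / 2"
    using IVT'[of "\<lambda>t. dist p (g t)" 0 "dist p q / 2" 1] g
    by (auto simp: pathstart_def pathfinish_def)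
  have "dist (g 0) (g t) + dist (g t) (g 1) < dist p q + e"
    using le_less_trans[OF curve_length_ge_two_chords[OF t(1,2)] len] by simp
  then have "dist (g t) q < dist p q / 2 + e"
    using g t by (simp add: pathstart_def pathfinish_def)
  moreover have "g t \<in> X" using g t by (auto simp: path_image_def)
  ultimately show ?thesis using t \<open>e > 0\<close> by (intro bexI[of _ "g t"]) auto
qed

lemma compact_length_space_has_midpoints:
  assumes "compact X" "length_space X"
  shows "has_midpoints X"
  unfolding has_midpoints_def
proof (intro ballI)
  fix p q assume "p \<in> X" "q \<in> X"
  then show "\<exists>m\<in>X. dist p m = dist p q / 2 \<and> dist m q = dist p q / 2"
    by (intro compact_approx_midpoint_imp_midpoint[OF assms(1)] length_space_approx_midpoint[OF assms(2)])
qed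

text \<open>The point w0 of the compact set of points between x and y at distance at least \<delta>
  from x, closest to x, has Menger points between it and x; these must be closer than \<delta>.\<close>
lemma compact_menger_convex_between_near:
  fixes X :: "'a::metric_space set"
  assumes "compact X" "menger_convex X" "x \<in> X" "y \<in> X" "x \<noteq> y" "\<delta> > 0"
  shows "\<exists>w\<in>X. w \<noteq> x \<and> dist x w + dist w y = dist x y \<and> dist x w \<le> \<delta>"
proof (rule ccontr)
  assume "\<not> ?thesis"
  then have far: "\<delta> < dist x w" if "w \<in> X" "w \<noteq> x" "dist x w + dist w y = dist x y" for w
    using that by (meson leI)
  define C where "C = X \<inter> {w. dist x w + dist w y = dist x y} \<inter> {w. \<delta> \<le> dist x w}"
  have "compact C" unfolding C_def using \<open>compact X\<close>
    by (intro compact_Int_closed closed_Int closed_Collect_eq closed_Collect_le continuous_intros) auto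
  moreover have "y \<in> C" using far[of y] assms(4,5) by (simp add: C_def)
  moreover have "continuous_on C (dist x)" by (intro continuous_intros)
  ultimately obtain w0 where w0: "w0 \<in> C" and min: "\<And>w. w \<in> C \<Longrightarrow> dist x w0 \<le> dist x w"
    using continuous_attains_inf[of C "dist x"] by blast
  then have "x \<noteq> w0" "w0 \<in> X" using \<open>\<delta> > 0\<close> by (auto simp: C_def)
  then obtain v where v: "v \<in> X" "v \<noteq> x" "v \<noteq> w0" "dist x v + dist v w0 = dist x w0"
    using menger_convex_def[THEN iffD1, rule_format, OF \<open>menger_convex X\<close> \<open>x \<in> X\<close>] by blast
  have "dist x v + dist v y = dist x y"
    using w0 v(4) dist_triangle[of v y w0] dist_triangle[of x y v] by (simp add: C_def)
  then have "v \<in> C" using far[of v] v(1,2) by (simp add: C_def)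
  then show False using min[of v] v(3,4) zero_less_dist_iff[of v w0] by linarith
qed

lemma compact_menger_convex_has_midpoints:
  fixes X :: "'a::metric_space set"
  assumes "compact X" "menger_convex X"
  shows "has_midpoints X"
  unfolding has_midpoints_def
proof (intro ballI)
  fix p q assume p: "p \<in> X" and q: "q \<in> X"
  define B where "B = X \<inter> {z. dist p z + dist z q = dist p q} \<inter> {z. dist p z \<le> dist p q / 2}"
  have "compact B" unfolding B_def using \<open>compact X\<close>
    by (intro compact_Int_closed closed_Int closed_Collect_eq closed_Collect_le continuous_intros) auto
  moreover have "p \<in> B" unfolding B_def using p by simp
  moreover have "continuous_on B (dist p)" by (intro continuous_intros)
  ultimately obtain z where z: "z \<in> B" and max: "\<And>w. w \<in> B \<Longrightarrow> dist p w \<le> dist p z"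
    using continuous_attains_sup[of B "dist p"] by blast
  have "dist p z = dist p q / 2"
  proof (rule ccontr)
    \<comment> \<open>otherwise a point between z and q close enough to z would lie in B farther from p\<close>
    assume "dist p z \<noteq> dist p q / 2"
    then have short: "dist p z < dist p q / 2" using z by (simp add: B_def)
    then have "z \<noteq> q" "z \<in> X" using z by (auto simp: B_def)
    then obtain w where w: "w \<in> X" "w \<noteq> z" "dist z w + dist w q = dist z q"
        "dist z w \<le> dist p q / 2 - dist p z"
      using compact_menger_convex_between_near[OF assms _ q, of z "dist p q / 2 - dist p z"] short
      by auto
    have far: "dist p w = dist p z + dist z w"
      using z w(3) dist_triangle[of p w z] dist_triangle[of p q w] by (simp add: B_def)
    then have "w \<in> B" using z w(1,3,4) by (simp add: B_def)
    then show False using max[of w] far w(2) by simp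
  qed
  then show "\<exists>m\<in>X. dist p m = dist p q / 2 \<and> dist m q = dist p q / 2"
    using z by (auto simp: B_def)
qed

section \<open>The travel time map\<close>

lemma travel_time_in_CS:
  assumes "compact S"
  shows "travel_time S p \<in> mspace (CS S)"
proof -
  have cont: "continuous_on S (travel_time S p)"
    unfolding travel_time_def by (intro continuous_on_cong[THEN iffD1, OF refl _ continuous_on_dist]) auto
  then have "bounded (travel_time S p ` S)"
    by (intro compact_imp_bounded compact_continuous_image assms)
  with cont show ?thesis unfolding CS_def by (auto simp: travel_time_def)
qed

lemma travel_time_dist_le:
  "mdist (CS S) (travel_time S p) (travel_time S q) \<le> dist p q"
  unfolding CS_def
proof (rule mdist_cfunspace_le)
  fix z
  have "\<bar>dist p z - dist q z\<bar> \<le> dist p q" by (metis abs_dist_diff_le dist_commute)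
  then show "mdist euclidean_metric (travel_time S p z) (travel_time S q z) \<le> dist p q"
    by (simp add: travel_time_def dist_real_def)
qed simp

lemma travel_time_dist_ge:
  assumes "compact S" "z \<in> S"
  shows "\<bar>dist p z - dist q z\<bar> \<le> mdist (CS S) (travel_time S p) (travel_time S q)"
  using mdist_cfunspace_imp_mdist_le[OF travel_time_in_CS[OF assms(1), of p, unfolded CS_def]
      travel_time_in_CS[OF assms(1), of q, unfolded CS_def] order_refl] assms(2)
  by (simp add: CS_def travel_time_def dist_real_def)

lemma travel_time_dist_attained:
  assumes "compact S" "S \<noteq> {}"
  obtains z where "z \<in> S" "mdist (CS S) (travel_time S p) (travel_time S q) = \<bar>dist p z - dist q z\<bar>"
proof -
  have "continuous_on S (\<lambda>z. \<bar>dist p z - dist q z\<bar>)" by (intro continuous_intros)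
  then obtain z where z: "z \<in> S" and max: "\<And>y. y \<in> S \<Longrightarrow> \<bar>dist p y - dist q y\<bar> \<le> \<bar>dist p z - dist q z\<bar>"
    using continuous_attains_sup[OF assms] by blast
  have "mdist (CS S) (travel_time S p) (travel_time S q) \<le> \<bar>dist p z - dist q z\<bar>"
    unfolding CS_def
    by (rule mdist_cfunspace_le) (use max in \<open>auto simp: travel_time_def dist_real_def\<close>)
  then show ?thesis using travel_time_dist_ge[OF assms(1) z, of p q] by (intro that[OF z]) linarith
qed

lemma continuous_map_travel_time:
  assumes "compact S"
  shows "continuous_map (top_of_set X) (mtopology_of (CS S)) (travel_time S)"
proof -
  have "Lipschitz_continuous_map (submetric euclidean_metric X) (CS S) (travel_time S)"
    unfolding Lipschitz_continuous_map_def
    using travel_time_in_CS[OF assms] travel_time_dist_le by (intro conjI exI[of _ 1]) auto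
  then show ?thesis
    using Lipschitz_continuous_imp_continuous_map by (fastforce simp: mtopology_of_submetric)
qed

lemma travel_time_embedding_if_inj:
  assumes "compact X" "compact S" "inj_on (travel_time S) X"
  shows "travel_time_embedding X S"
  unfolding travel_time_embedding_def
proof (rule continuous_imp_embedding_map)
  show "Hausdorff_space (mtopology_of (CS S))"
    unfolding mtopology_of_def by (rule Metric_space.Hausdorff_space_mtopology) simp
qed (use assms continuous_map_travel_time in \<open>auto intro: compact_space_subtopology\<close>)

section \<open>Injectivity in Busemann G-spaces\<close>

lemma non_branchingD:
  assumes "non_branching X" "shortest_curve X g1 a b1" "shortest_curve X g2 a b2"
    "a < c" "c \<le> min b1 b2" "\<And>t. t \<in> {a..c} \<Longrightarrow> g1 t = g2 t" "t \<in> {a..min b1 b2}"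
  shows "g1 t = g2 t"
  using assms unfolding non_branching_def by blast

lemma non_branching_common_end_imp_eq_start:
  assumes "non_branching X" "shortest_curve X g 0 D" "shortest_curve X k 0 D" "0 < s" "s \<le> D"
    and agree: "\<And>t. t \<in> {D - s..D} \<Longrightarrow> g t = k t"
  shows "g 0 = k 0"
  using non_branchingD[OF assms(1) shortest_curve_reverse[OF assms(2)] shortest_curve_reverse[OF assms(3)],
      of s D] assms(4,5) agree
  by simp

text \<open>If p and q have the same distances to all points of U, follow a shortest curve from p
  to some z0 in U up to a point w of U near z0. A shortest curve from q to w continued along
  the first one is then a shortest curve from q to z0, and non-branching at z0 forces p = q.\<close>
lemma equal_dists_on_open_imp_eq:
  fixes X :: "'a::metric_space set"
  assumes X: "compact X" "menger_convex X" "non_branching X"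
    and U: "openin (top_of_set X) U" "z0 \<in> U"
    and "p \<in> X" "q \<in> X" and eq: "\<And>z. z \<in> U \<Longrightarrow> dist p z = dist q z"
  shows "p = q"
proof (cases "p = z0")
  case True
  then show ?thesis using eq[OF U(2)] by simp
next
  case False
  define D where "D = dist p z0"
  have D: "D > 0" using False by (simp add: D_def)
  have geodesic: "\<exists>g. shortest_curve X g 0 (dist x y) \<and> g 0 = x \<and> g (dist x y) = y"
    if "x \<in> X" "y \<in> X" for x y
    using compact_has_midpoints_shortest_curve[OF X(1) compact_menger_convex_has_midpoints[OF X(1,2)]]
      that by blast
  have z0: "z0 \<in> X" using U openin_subset by fastforce
  obtain g where g: "shortest_curve X g 0 D" "g 0 = p" "g D = z0"
    using geodesic[OF \<open>p \<in> X\<close> z0] unfolding D_def by blast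
  obtain \<rho> where \<rho>: "\<rho> > 0" "\<And>w. w \<in> X \<Longrightarrow> dist w z0 < \<rho> \<Longrightarrow> w \<in> U"
    using U by (force simp: openin_euclidean_subtopology_iff)
  define s where "s = min D (\<rho>/2)"
  have s: "0 < s" "s \<le> D" "s < \<rho>" using D \<rho> by (auto simp: s_def)
  define w where "w = g (D - s)"
  have "w \<in> X" using g(1) s unfolding shortest_curve_def w_def by auto
  moreover have "dist w z0 = s" "dist p w = D - s"
    using shortest_curve_dist[OF g(1), of "D - s" D] shortest_curve_dist[OF g(1), of 0 "D - s"] s g(2,3)
    by (simp_all add: w_def)
  ultimately have "w \<in> U" "dist q w = D - s" using \<rho>(2) s eq by auto
  then obtain f where f: "shortest_curve X f 0 (D - s)" "f 0 = q" "f (D - s) = w"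
    using geodesic[OF \<open>q \<in> X\<close> \<open>w \<in> X\<close>] by auto
  define k where "k t = (if t \<le> D - s then f t else g t)" for t
  have "shortest_curve X k 0 D"
    unfolding k_def
    by (rule shortest_curve_join[OF f(1) shortest_curve_subinterval[OF g(1)]])
       (use f g s eq[OF U(2)] D_def w_def in auto)
  moreover have "\<And>t. t \<in> {D - s..D} \<Longrightarrow> g t = k t" using f(3) by (auto simp: k_def w_def)
  ultimately have "g 0 = k 0" using non_branching_common_end_imp_eq_start[OF X(3) g(1)] s by blast
  then show ?thesis using g(2) f(2) s by (simp add: k_def)
qed

section \<open>Local isometry and extendable shortest curves\<close>

lemma extends_to_S_if_between:
  fixes X :: "'a::metric_space set"
  assumes "compact X" "has_midpoints X" "p \<in> X" "q \<in> X" "z \<in> X" "z \<in> S"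
    and between: "dist p z = dist p q + dist q z"
  shows "extends_to_S X S p q"
proof -
  define d1 d2 where "d1 = dist p q" and "d2 = dist q z"
  obtain f1 where f1: "shortest_curve X f1 0 d1" "f1 0 = p" "f1 d1 = q"
    using compact_has_midpoints_shortest_curve[OF assms(1-4)] unfolding d1_def by blast
  obtain f2 where f2: "shortest_curve X f2 0 d2" "f2 0 = q" "f2 d2 = z"
    using compact_has_midpoints_shortest_curve[OF assms(1,2,4,5)] unfolding d2_def by blast
  define g where "g t = (if t \<le> d1 then f1 t else f2 (t - d1))" for t
  have "shortest_curve X g 0 (d1 + d2)"
    unfolding g_def
    by (rule shortest_curve_join[OF f1(1) shortest_curve_shift[OF f2(1)]])
       (use f1 f2 between d1_def d2_def in auto)
  moreover have "g (d1 + d2) = z" using f1 f2 by (cases "d2 = 0") (auto simp: g_def d2_def)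
  moreover have "g 0 = p" "g d1 = q" using f1 d1_def by (auto simp: g_def)
  ultimately show ?thesis
    unfolding extends_to_S_def using \<open>z \<in> S\<close> d2_def
    by (intro exI[of _ g] exI[of _ "d1 + d2"]) (simp add: d1_def)
qed

lemma extends_to_S_imp_travel_time_isometric:
  assumes "compact S" "extends_to_S X S p q"
  shows "mdist (CS S) (travel_time S p) (travel_time S q) = dist p q"
proof -
  obtain g c where g: "shortest_curve X g 0 c" "g 0 = p" "dist p q \<le> c" "g (dist p q) = q" "g c \<in> S"
    using assms(2) unfolding extends_to_S_def by blast
  have "dist p (g c) = c" "dist q (g c) = c - dist p q"
    using shortest_curve_dist[OF g(1), of 0 c] shortest_curve_dist[OF g(1), of "dist p q" c] g
    by (auto simp: shortest_curve_def)
  then show ?thesis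
    using travel_time_dist_ge[OF assms(1) g(5), of p q] travel_time_dist_le[of S p q] by simp
qed

lemma travel_time_isometric_imp_extends_to_S:
  fixes X :: "'a::metric_space set"
  assumes "compact X" "has_midpoints X" "S \<subseteq> X" "compact S" "S \<noteq> {}" "p \<in> X" "q \<in> X"
    and iso: "mdist (CS S) (travel_time S p) (travel_time S q) = dist p q"
  shows "extends_to_S X S p q \<or> extends_to_S X S q p"
proof -
  obtain z where z: "z \<in> S" "\<bar>dist p z - dist q z\<bar> = dist p q"
    using travel_time_dist_attained[OF assms(4,5), of p q] iso by metis
  then have "z \<in> X" using assms(3) by blast
  consider "dist p z = dist p q + dist q z" | "dist q z = dist q p + dist p z"
    using z(2) by (cases "dist q z \<le> dist p z") (auto simp: dist_commute)
  then show ?thesis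
    using extends_to_S_if_between[OF assms(1,2,6,7) \<open>z \<in> X\<close> z(1)]
      extends_to_S_if_between[OF assms(1,2,7,6) \<open>z \<in> X\<close> z(1)] by metis
qed

lemma FLIE_iff_extends_to_S:
  fixes X :: "'a::metric_space set"
  assumes "compact X" "has_midpoints X" "S \<subseteq> X" "compact S" "S \<noteq> {}" "travel_time_embedding X S"
  shows "FLIE eps X S \<longleftrightarrow>
    (\<forall>p\<in>X. \<forall>q\<in>X. dist p q < eps \<longrightarrow> extends_to_S X S p q \<or> extends_to_S X S q p)"
proof -
  have "mdist (CS S) (travel_time S p) (travel_time S q) = dist p q \<longleftrightarrow>
      extends_to_S X S p q \<or> extends_to_S X S q p" if "p \<in> X" "q \<in> X" for p q
    using travel_time_isometric_imp_extends_to_S[OF assms(1-5) that]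
      extends_to_S_imp_travel_time_isometric[OF assms(4), of X p q]
      extends_to_S_imp_travel_time_isometric[OF assms(4), of X q p]
    by (auto simp: mdist_commute dist_commute)
  then show ?thesis
    using assms(6) continuous_map_travel_time[OF assms(4)]
    by (auto simp: FLIE_def local_isometry_CS_def)
qed

theorem mainTheorem4:
  shows "(\<forall>(X :: 'a::metric_space set) S U.
            compact X \<and> busemann_G_space X \<and> openin (top_of_set X) U \<and> U \<noteq> {} \<and>
            S = closure U \<longrightarrow> travel_time_embedding X S)
       \<and> (\<forall>(X :: 'a set) S (eps :: real).
            compact X \<and> length_space X \<and> S \<subseteq> X \<and> closed S \<and> S \<noteq> {} \<and>
            travel_time_embedding X S \<and> eps > 0 \<longrightarrow>
            (FLIE eps X S \<longleftrightarrow>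
               (\<forall>p\<in>X. \<forall>q\<in>X. dist p q < eps \<longrightarrow> extends_to_S X S p q \<or> extends_to_S X S q p)))"
proof (intro conjI allI impI; elim conjE)
  fix X :: "'a set" and S U
  assume X: "compact X" "busemann_G_space X" and U: "openin (top_of_set X) U" "U \<noteq> {}"
    and S: "S = closure U"
  then obtain z0 where "z0 \<in> U" by blast
  have "U \<subseteq> X" using openin_subset[OF U(1)] by simp
  then have "S \<subseteq> X" using S closure_minimal compact_imp_closed[OF X(1)] by blast
  then have "compact S" using X(1) S compact_Int_closed[of X S] by (simp add: Int_absorb1)
  have "inj_on (travel_time S) X"
  proof (rule inj_onI)
    fix p q assume "p \<in> X" "q \<in> X" and eq: "travel_time S p = travel_time S q"
    have "dist p z = dist q z" if "z \<in> U" for z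
      using fun_cong[OF eq, of z] that closure_subset[of U] S by (auto simp: travel_time_def)
    with X U(1) \<open>z0 \<in> U\<close> \<open>p \<in> X\<close> \<open>q \<in> X\<close> show "p = q"
      by (intro equal_dists_on_open_imp_eq[of X U z0 p q]) (auto simp: busemann_G_space_def)
  qed
  then show "travel_time_embedding X S"
    using travel_time_embedding_if_inj X(1) \<open>compact S\<close> by blast
next
  fix X :: "'a set" and S and eps :: real
  assume "compact X" "length_space X" "S \<subseteq> X" "closed S" "S \<noteq> {}" "travel_time_embedding X S"
  moreover have "compact S"
    using \<open>compact X\<close> \<open>closed S\<close> \<open>S \<subseteq> X\<close> compact_Int_closed[of X S] by (simp add: Int_absorb1)
  ultimately show "FLIE eps X S \<longleftrightarrow>
      (\<forall>p\<in>X. \<forall>q\<in>X. dist p q < eps \<longrightarrow> extends_to_S X S p q \<or> extends_to_S X S q p)"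
    using FLIE_iff_extends_to_S compact_length_space_has_midpoints by blast
qed

end
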